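(* Let $x_1=(a_1,b_1),\dots,x_k=(a_k,b_k)\in\mathbb{F}_2^n\times\mathbb{F}_2^n$ be such that $[x_i,x_j]=1$ for all $i\ne j$. Then for every function $f:\mathbb{F}_2^n\to\mathbb{C}$, $$\sum_{i=1}^k\big|\widehat{\Delta_{a_i}f}(b_i)\big|^2\le\|f\|_2^4.$$
   Context: $[(a,b),(c,d)]=a\cdot d+b\cdot c\in\mathbb{F}_2$ is the standard symplectic form. $\Delta_af(x)=f(x+a)\overline{f(x)}$, $\hat g(b)=\mathbb{E}_{x\in\mathbb{F}_2^n}g(x)(-1)^{b\cdot x}$, $\|f\|_2=(\mathbb{E}_x|f(x)|^2)^{1/2}$. *)

theory Defs
  imports "HOL-Analysis.Analysis"
begin

text \<open>F_2^n is modelled as bool ^ 'n (True = 1), with addition = componentwise xor.\<close>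

definition vadd :: "bool ^ 'n \<Rightarrow> bool ^ 'n \<Rightarrow> bool ^ 'n" where
  "vadd x y = (\<chi> i. x $ i \<noteq> y $ i)"

definition fdot :: "bool ^ 'n \<Rightarrow> bool ^ 'n \<Rightarrow> bool" where
  "fdot a x = odd (card {i. a $ i \<and> x $ i})"

definition symp :: "((bool ^ 'n) \<times> (bool ^ 'n)) \<Rightarrow> ((bool ^ 'n) \<times> (bool ^ 'n)) \<Rightarrow> bool" where
  "symp p q = (fdot (fst p) (snd q) \<noteq> fdot (snd p) (fst q))"

definition sgn2 :: "bool \<Rightarrow> complex" where
  "sgn2 t = (if t then -1 else 1)"

definition Delta :: "bool ^ 'n \<Rightarrow> (bool ^ 'n \<Rightarrow> complex) \<Rightarrow> bool ^ 'n \<Rightarrow> complex" where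
  "Delta a f x = f (vadd x a) * cnj (f x)"

definition fourier :: "(bool ^ 'n \<Rightarrow> complex) \<Rightarrow> bool ^ 'n \<Rightarrow> complex" where
  "fourier g b = (\<Sum>x\<in>UNIV. g x * sgn2 (fdot b x)) / of_nat CARD(bool ^ 'n)"

definition norm2 :: "(bool ^ 'n \<Rightarrow> complex) \<Rightarrow> real" where
  "norm2 f = sqrt ((\<Sum>x\<in>UNIV. (cmod (f x))\<^sup>2) / real CARD(bool ^ 'n))"

end

theory Submission
  imports Defs
begin

text \<open>For \<open>p = (a, b)\<close> let \<open>W\<^sub>p g x = (-1)^(b\<cdot>x) g (x + a)\<close>, so that
  \<open>(\<Delta>\<^sub>a f)^(b) = \<langle>W\<^sub>p f, f\<rangle> / 2^n\<close>. The Pauli operators \<open>P\<^sub>p = i^(a\<cdot>b) W\<^sub>p\<close> are self-adjoint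
  involutions, and \<open>P\<^sub>p\<close>, \<open>P\<^sub>q\<close> anticommute when \<open>[p, q] = 1\<close>. Hence the vectors \<open>P\<^bsub>x\<^sub>i\<^esub> f\<close> all have
  norm \<open>\<parallel>f\<parallel>\<close> and are pairwise orthogonal for the real inner product \<open>Re \<langle>_, _\<rangle>\<close>, while
  \<open>\<langle>P\<^bsub>x\<^sub>i\<^esub> f, f\<rangle>\<close> is real of modulus \<open>|\<langle>W\<^bsub>x\<^sub>i\<^esub> f, f\<rangle>|\<close>. Bessel's inequality for these vectors,
  rescaled by \<open>2^n\<close>, is the claim.\<close>

lemma bessel_inequality:
  fixes v :: "'i \<Rightarrow> 'a::real_inner"
  assumes I: "finite I"
    and orth: "pairwise (\<lambda>i j. orthogonal (v i) (v j)) I"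
    and bound: "\<And>i. i \<in> I \<Longrightarrow> norm (v i) \<le> c"
  shows "(\<Sum>i\<in>I. (inner (v i) y)\<^sup>2) \<le> c\<^sup>2 * (norm y)\<^sup>2"
proof -
  define t where "t i = inner (v i) y" for i
  define T where "T = (\<Sum>i\<in>I. (t i)\<^sup>2)"
  define g where "g = (\<Sum>i\<in>I. t i *\<^sub>R v i)"
  have g_y: "inner g y = T"
    by (simp add: g_def T_def t_def inner_sum_left power2_eq_square)
  have "(norm g)\<^sup>2 = (\<Sum>i\<in>I. (t i)\<^sup>2 * (norm (v i))\<^sup>2)"
    unfolding g_def using norm_sum_Pythagorean[OF I pairwise_ortho_scaleR[OF orth]]
    by (simp add: power_mult_distrib)
  also have "\<dots> \<le> (\<Sum>i\<in>I. (t i)\<^sup>2 * c\<^sup>2)"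
    using bound by (intro sum_mono mult_left_mono power_mono) auto
  finally have norm_g: "(norm g)\<^sup>2 \<le> c\<^sup>2 * T"
    by (simp add: T_def sum_distrib_left mult.commute)
  have "T * T \<le> (c\<^sup>2 * (norm y)\<^sup>2) * T"
  proof -
    have "T\<^sup>2 \<le> (norm g)\<^sup>2 * (norm y)\<^sup>2"
      using Cauchy_Schwarz_ineq[of g y] by (simp add: g_y power2_norm_eq_inner)
    also have "\<dots> \<le> c\<^sup>2 * T * (norm y)\<^sup>2"
      using norm_g by (simp add: mult_right_mono)
    finally show ?thesis by (simp add: power2_eq_square mult_ac)
  qed
  moreover have "0 \<le> T"
    by (simp add: T_def sum_nonneg)
  ultimately show ?thesis
    unfolding T_def[symmetric] t_def[symmetric]
    by (cases "T = 0") (simp_all add: mult_le_cancel_right)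
qed

lemma odd_card_sym_diff:
  assumes "finite A" "finite B"
  shows "odd (card (sym_diff A B)) \<longleftrightarrow> odd (card A) \<noteq> odd (card B)"
proof -
  have "A \<union> B = sym_diff A B \<union> (A \<inter> B)"
    by blast
  then have "card (A \<union> B) = card (sym_diff A B) + card (A \<inter> B)"
    using assms card_Un_disjoint[of "sym_diff A B" "A \<inter> B"] by auto
  then have "card A + card B = card (sym_diff A B) + 2 * card (A \<inter> B)"
    using card_Un_Int[OF assms] by simp
  then show ?thesis
    by presburger
qed

lemma vadd_vadd_cancel [simp]: "vadd (vadd x a) a = x"
  by (auto simp: vadd_def vec_eq_iff)

lemma vadd_commute: "vadd x a = vadd a x"
  by (auto simp: vadd_def vec_eq_iff)

lemma vadd_assoc: "vadd (vadd x a) b = vadd x (vadd a b)"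
  by (auto simp: vadd_def vec_eq_iff)

lemma sum_vadd_shift: "(\<Sum>x\<in>UNIV. h (vadd x a)) = (\<Sum>x\<in>UNIV. h x)"
  by (rule sum.reindex_bij_witness[where i="\<lambda>y. vadd y a" and j="\<lambda>y. vadd y a"]) auto

lemma fdot_commute: "fdot a b = fdot b a"
  by (simp add: fdot_def conj_commute)

lemma fdot_vadd_right: "fdot b (vadd x a) \<longleftrightarrow> fdot b x \<noteq> fdot b a"
proof -
  have "{i. b $ i \<and> vadd x a $ i}
      = sym_diff {i. b $ i \<and> x $ i} {i. b $ i \<and> a $ i}"
    by (auto simp: vadd_def)
  then show ?thesis
    unfolding fdot_def by (simp add: odd_card_sym_diff)
qed

definition hinner :: "('a::finite \<Rightarrow> complex) \<Rightarrow> ('a \<Rightarrow> complex) \<Rightarrow> complex" where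
  "hinner g h = (\<Sum>x\<in>UNIV. g x * cnj (h x))"

lemma hinner_commute: "hinner h g = cnj (hinner g h)"
  by (simp add: hinner_def mult.commute)

lemma hinner_scale_left: "hinner (\<lambda>x. c * g x) h = c * hinner g h"
  by (simp add: hinner_def sum_distrib_left mult.assoc)

lemma hinner_scale_right: "hinner g (\<lambda>x. c * h x) = cnj c * hinner g h"
  by (simp add: hinner_def sum_distrib_left mult.left_commute)

lemma hinner_minus_right: "hinner g (\<lambda>x. - h x) = - hinner g h"
  by (simp add: hinner_def sum_negf)

lemma inner_vec_lambda: "inner (vec_lambda g) (vec_lambda h) = Re (hinner g h)"
  by (simp add: inner_vec_def hinner_def inner_complex_def Re_sum)

definition weyl :: "(bool ^ 'n) \<times> (bool ^ 'n) \<Rightarrow> (bool ^ 'n \<Rightarrow> complex) \<Rightarrow> bool ^ 'n \<Rightarrow> complex" where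
  "weyl p g x = sgn2 (fdot (snd p) x) * g (vadd x (fst p))"

lemma weyl_scale: "weyl p (\<lambda>x. c * g x) = (\<lambda>x. c * weyl p g x)"
  by (simp add: weyl_def fun_eq_iff mult.left_commute)

lemma weyl_adjoint: "hinner (weyl p g) h = sgn2 (fdot (fst p) (snd p)) * hinner g (weyl p h)"
proof -
  obtain a b where p: "p = (a, b)"
    by fastforce
  have "hinner (weyl p g) h = (\<Sum>x\<in>UNIV. sgn2 (fdot b x) * g (vadd x a) * cnj (h x))"
    by (simp add: hinner_def weyl_def p)
  also have "\<dots> = (\<Sum>x\<in>UNIV. sgn2 (fdot b (vadd x a)) * g x * cnj (h (vadd x a)))"
    using sum_vadd_shift[of "\<lambda>x. sgn2 (fdot b x) * g (vadd x a) * cnj (h x)" a] by simp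
  also have "\<dots> = (\<Sum>x\<in>UNIV. sgn2 (fdot a b) * (g x * cnj (sgn2 (fdot b x) * h (vadd x a))))"
    by (intro sum.cong refl) (simp add: fdot_vadd_right fdot_commute[of b a] sgn2_def)
  also have "\<dots> = sgn2 (fdot (fst p) (snd p)) * hinner g (weyl p h)"
    by (simp add: hinner_def weyl_def p sum_distrib_left)
  finally show ?thesis .
qed

lemma weyl_weyl_self: "weyl p (weyl p g) = (\<lambda>x. sgn2 (fdot (fst p) (snd p)) * g x)"
  by (simp add: weyl_def fun_eq_iff fdot_vadd_right fdot_commute[of "snd p"] sgn2_def)

lemma weyl_anticommute:
  assumes "symp p q"
  shows "weyl p (weyl q g) = (\<lambda>x. - weyl q (weyl p g) x)"
proof
  fix x
  have "vadd (vadd x (fst q)) (fst p) = vadd (vadd x (fst p)) (fst q)"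
    by (metis vadd_assoc vadd_commute)
  moreover have "fdot (snd q) (fst p) \<noteq> fdot (snd p) (fst q)"
    using assms by (simp add: symp_def fdot_commute)
  ultimately show "weyl p (weyl q g) x = - weyl q (weyl p g) x"
    by (simp add: weyl_def fdot_vadd_right sgn2_def)
qed

text \<open>The phase \<open>i^(a\<cdot>b)\<close> cancels the sign \<open>(-1)^(a\<cdot>b)\<close> of \<open>weyl_adjoint\<close> and
  \<open>weyl_weyl_self\<close>, so that \<open>pauli p\<close> is a self-adjoint involution.\<close>

definition pauli :: "(bool ^ 'n) \<times> (bool ^ 'n) \<Rightarrow> (bool ^ 'n \<Rightarrow> complex) \<Rightarrow> bool ^ 'n \<Rightarrow> complex" where
  "pauli p g x = (if fdot (fst p) (snd p) then \<i> else 1) * weyl p g x"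

lemma pauli_self_adjoint: "hinner (pauli p g) h = hinner g (pauli p h)"
  unfolding pauli_def[abs_def] hinner_scale_left hinner_scale_right weyl_adjoint
  by (simp add: sgn2_def)

lemma pauli_involution: "pauli p (pauli p g) = g"
  unfolding pauli_def[abs_def] weyl_scale weyl_weyl_self by (simp add: sgn2_def)

lemma pauli_anticommute:
  assumes "symp p q"
  shows "pauli p (pauli q g) = (\<lambda>x. - pauli q (pauli p g) x)"
  unfolding pauli_def[abs_def] weyl_scale weyl_anticommute[OF assms] by (simp add: algebra_simps)

lemma hinner_pauli_real: "hinner (pauli p g) g = of_real (Re (hinner (pauli p g) g))"
proof -
  have "hinner (pauli p g) g = cnj (hinner (pauli p g) g)"
    by (metis pauli_self_adjoint hinner_commute)
  then show ?thesis
    by (simp add: complex_eq_iff)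
qed

lemma cmod_hinner_weyl: "cmod (hinner (weyl p g) g) = \<bar>Re (hinner (pauli p g) g)\<bar>"
proof -
  have "hinner (pauli p g) g = (if fdot (fst p) (snd p) then \<i> else 1) * hinner (weyl p g) g"
    by (simp add: pauli_def[abs_def] hinner_scale_left)
  then have "cmod (hinner (weyl p g) g) = cmod (hinner (pauli p g) g)"
    by (simp add: norm_mult)
  then show ?thesis
    by (subst (asm) hinner_pauli_real) simp
qed

lemma hinner_pauli_pauli_self: "hinner (pauli p g) (pauli p g) = hinner g g"
  by (simp add: pauli_self_adjoint pauli_involution)

lemma Re_hinner_pauli_anticommute:
  assumes "symp p q"
  shows "Re (hinner (pauli p g) (pauli q g)) = 0"
proof -
  have "hinner (pauli p g) (pauli q g) = - hinner (pauli q g) (pauli p g)"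
    by (simp add: pauli_self_adjoint pauli_anticommute[OF assms] hinner_minus_right)
  then show ?thesis
    by (subst (asm) hinner_commute) (simp add: complex_eq_iff)
qed

lemma fourier_Delta:
  fixes a b :: "bool ^ 'n"
  shows "fourier (Delta a f) b = hinner (weyl (a, b) f) f / of_nat CARD(bool ^ 'n)"
  by (simp add: fourier_def Delta_def hinner_def weyl_def mult_ac)

lemma norm2_eq_norm_vec_lambda:
  fixes f :: "bool ^ 'n \<Rightarrow> complex"
  shows "norm2 f = norm (vec_lambda f :: complex ^ (bool ^ 'n)) / sqrt (real CARD(bool ^ 'n))"
  by (simp add: norm2_def norm_vec_def L2_set_def real_sqrt_divide)

theorem lemma2p15:
  fixes x :: "nat \<Rightarrow> ((bool ^ 'n) \<times> (bool ^ 'n))"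
    and k :: nat
    and f :: "bool ^ 'n \<Rightarrow> complex"
  assumes "\<And>i j. i \<in> {1..k} \<Longrightarrow> j \<in> {1..k} \<Longrightarrow> i \<noteq> j \<Longrightarrow> symp (x i) (x j)"
  shows "(\<Sum>i=1..k. (cmod (fourier (Delta (fst (x i)) f) (snd (x i))))\<^sup>2) \<le> (norm2 f) ^ 4"
proof -
  define N where "N = real CARD(bool ^ 'n)"
  define y where "y = (vec_lambda f :: complex ^ (bool ^ 'n))"
  define v where "v i = (vec_lambda (pauli (x i) f) :: complex ^ (bool ^ 'n))" for i
  have coeff: "cmod (fourier (Delta (fst (x i)) f) (snd (x i))) = \<bar>inner (v i) y\<bar> / N" for i
    by (simp add: fourier_Delta norm_divide norm_power cmod_hinner_weyl inner_vec_lambda v_def y_def N_def)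
  have "pairwise (\<lambda>i j. orthogonal (v i) (v j)) {1..k}"
    using assms by (auto simp: pairwise_def orthogonal_def inner_vec_lambda v_def
        Re_hinner_pauli_anticommute)
  moreover have "norm (v i) = norm y" for i
    by (simp add: norm_eq_sqrt_inner inner_vec_lambda hinner_pauli_pauli_self v_def y_def)
  ultimately have "(\<Sum>i=1..k. (inner (v i) y)\<^sup>2) \<le> (norm y)\<^sup>2 * (norm y)\<^sup>2"
    by (intro bessel_inequality) auto
  moreover have "(norm2 f) ^ 4 = (norm y)\<^sup>2 * (norm y)\<^sup>2 / N\<^sup>2"
  proof -
    have "sqrt N ^ 4 = (sqrt N ^ 2)\<^sup>2"
      by (simp flip: power_mult)
    also have "\<dots> = N\<^sup>2"
      by (simp add: N_def)
    finally have "sqrt N ^ 4 = N\<^sup>2" .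
    then show ?thesis
      unfolding norm2_eq_norm_vec_lambda y_def[symmetric] N_def[symmetric]
      by (simp add: power_divide)
  qed
  ultimately show ?thesis
    by (simp add: coeff power_divide divide_right_mono flip: sum_divide_distrib)
qed

end
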